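(* Let $0<r<1$ and let $A,B\in C_{1,r}$ be doubly commuting operators on a Hilbert space $\mathcal H$ (i.e. $AB=BA$ and $AB^*=B^*A$). Let $\mathcal H=\mathcal H_1\oplus\mathcal H_2$ be the canonical decomposition of $A$, where $\mathcal H_1$ is the maximal closed subspace reducing $A$ such that $A|_{\mathcal H_1}\in\mathcal C_{1,r}$ and $\mathcal H_2=\mathcal H\ominus\mathcal H_1$ (so $A|_{\mathcal H_2}$ is a c.n.u. $C_{1,r}$-contraction). Then $\mathcal H_1$ and $\mathcal H_2$ are reducing subspaces for $B$.
   Context: $C_{1,r}=\{T: T\text{ invertible},\ \|T\|\le1,\ \|rT^{-1}\|\le1\}$. $\mathcal C_{1,r}$ is the class of operators $J$ on a Hilbert space $\mathcal L$ for which there exist orthogonal projections $P_0,P_1$ on $\mathcal L$ with $P_0+P_1=I_{\mathcal L}$ and $J^*J=P_0+r^2P_1$. An operator $T\in C_{1,r}$ on $\mathcal H$ is a c.n.u. $C_{1,r}$-contraction if $\mathcal H$ has no non-zero closed subspace that reduces $T$ to an operator in $\mathcal C_{1,r}$. (Such a maximal reducing subspace $\mathcal H_1$ exists and the decomposition is unique.) *)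

theory Defs
  imports "HOL-Analysis.Analysis"
begin

class complex_vector = real_vector +
  fixes scaleC :: "complex \<Rightarrow> 'a \<Rightarrow> 'a" (infixr "*\<^sub>C" 75)
  assumes scaleC_add_right: "a *\<^sub>C (x + y) = a *\<^sub>C x + a *\<^sub>C y"
    and scaleC_add_left: "(a + b) *\<^sub>C x = a *\<^sub>C x + b *\<^sub>C x"
    and scaleC_scaleC: "a *\<^sub>C (b *\<^sub>C x) = (a * b) *\<^sub>C x"
    and scaleC_one: "1 *\<^sub>C x = x"
    and scaleR_scaleC: "r *\<^sub>R x = complex_of_real r *\<^sub>C x"

class complex_inner = complex_vector + real_normed_vector +
  fixes cinner :: "'a \<Rightarrow> 'a \<Rightarrow> complex"
  assumes cinner_commute: "cinner x y = cnj (cinner y x)"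
    and cinner_add_left: "cinner (x + y) z = cinner x z + cinner y z"
    and cinner_scaleC_left: "cinner (a *\<^sub>C x) y = cnj a * cinner x y"
    and cinner_self_real: "Im (cinner x x) = 0"
    and cinner_self_nonneg: "0 \<le> Re (cinner x x)"
    and cinner_self_eq_zero: "cinner x x = 0 \<longleftrightarrow> x = 0"
    and norm_eq_sqrt_cinner: "norm x = sqrt (Re (cinner x x))"

class chilbert_space = complex_inner + complete_space

definition bounded_clinear :: "('a::complex_inner \<Rightarrow> 'b::complex_inner) \<Rightarrow> bool" where
  "bounded_clinear T \<longleftrightarrow> bounded_linear T \<and> (\<forall>c x. T (c *\<^sub>C x) = c *\<^sub>C T x)"

definition cadjoint :: "('a::complex_inner \<Rightarrow> 'a) \<Rightarrow> ('a \<Rightarrow> 'a)" where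
  "cadjoint T = (SOME S. \<forall>x y. cinner (T x) y = cinner x (S y))"

definition invertible_op :: "('a::complex_inner \<Rightarrow> 'a) \<Rightarrow> bool" where
  "invertible_op T \<longleftrightarrow> bounded_clinear T \<and>
     (\<exists>S. bounded_clinear S \<and> (\<forall>x. S (T x) = x) \<and> (\<forall>x. T (S x) = x))"

definition C1r :: "real \<Rightarrow> ('a::complex_inner \<Rightarrow> 'a) \<Rightarrow> bool" where
  "C1r r T \<longleftrightarrow> invertible_op T \<and> onorm T \<le> 1 \<and> onorm (\<lambda>x. r *\<^sub>R inv T x) \<le> 1"

definition csubspace :: "'a::complex_vector set \<Rightarrow> bool" where
  "csubspace M \<longleftrightarrow> 0 \<in> M \<and> (\<forall>x\<in>M. \<forall>y\<in>M. x + y \<in> M) \<and> (\<forall>c. \<forall>x\<in>M. c *\<^sub>C x \<in> M)"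

definition closed_csubspace :: "'a::complex_inner set \<Rightarrow> bool" where
  "closed_csubspace M \<longleftrightarrow> csubspace M \<and> closed M"

definition orthogonal_complement :: "'a::complex_inner set \<Rightarrow> 'a set" where
  "orthogonal_complement M = {x. \<forall>y\<in>M. cinner y x = 0}"

definition reduces :: "('a::complex_inner \<Rightarrow> 'a) \<Rightarrow> 'a set \<Rightarrow> bool" where
  "reduces T M \<longleftrightarrow> closed_csubspace M \<and> T ` M \<subseteq> M \<and> cadjoint T ` M \<subseteq> M"

definition orth_proj_on :: "'a::complex_inner set \<Rightarrow> ('a \<Rightarrow> 'a) \<Rightarrow> bool" where
  "orth_proj_on M P \<longleftrightarrow> (\<forall>x\<in>M. P x \<in> M) \<and>
     (\<forall>x\<in>M. \<forall>y\<in>M. P (x + y) = P x + P y) \<and> (\<forall>c. \<forall>x\<in>M. P (c *\<^sub>C x) = c *\<^sub>C P x) \<and>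
     (\<forall>x\<in>M. P (P x) = P x) \<and> (\<forall>x\<in>M. \<forall>y\<in>M. cinner (P x) y = cinner x (P y))"

text \<open>The restriction \<open>J|M\<close> of J to the (J-reducing) closed subspace M lies in the
  class \<open>\<C>_{1,r}\<close>: there are orthogonal projections P0, P1 on M with P0 + P1 = I_M and
  \<open>(J|M)^*(J|M) = P0 + r^2 P1\<close>; the operator identity on M is written out via
  the defining property of the adjoint on M, i.e. \<open>\<langle>Jx, Jy\<rangle> = \<langle>x, (P0 + r^2 P1) y\<rangle>\<close>
  for x, y in M.\<close>
definition classC1r_on :: "real \<Rightarrow> 'a::complex_inner set \<Rightarrow> ('a \<Rightarrow> 'a) \<Rightarrow> bool" where
  "classC1r_on r M J \<longleftrightarrow> (\<exists>P0 P1. orth_proj_on M P0 \<and> orth_proj_on M P1 \<and>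
     (\<forall>x\<in>M. P0 x + P1 x = x) \<and>
     (\<forall>x\<in>M. \<forall>y\<in>M. cinner (J x) (J y) = cinner x (P0 y + complex_of_real (r\<^sup>2) *\<^sub>C P1 y)))"

end

theory Submission
  imports Defs
begin

text \<open>For a subspace \<open>M\<close> reducing \<open>A\<close>, the restriction \<open>A|M\<close> lies in
  \<open>\<C>_{1,r}\<close> exactly when \<open>D = (A\<^sup>*A - 1)(A\<^sup>*A - r\<^sup>2)\<close> vanishes on \<open>M\<close>;
  the projections are then \<open>P0 = (A\<^sup>*A - r\<^sup>2)/(1 - r\<^sup>2)\<close> and \<open>P1 = 1 - P0\<close>.
  So \<open>H1\<close> is the largest \<open>A\<close>-reducing subspace inside the kernel of \<open>D\<close>,
  namely the set of \<open>x\<close> with \<open>D (W x) = 0\<close> for every word \<open>W\<close> in \<open>A\<close> and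
  \<open>A\<^sup>*\<close>. An operator commuting with \<open>A\<close> and \<open>A\<^sup>*\<close> commutes with \<open>D\<close>
  and with every such word, hence leaves \<open>H1\<close> invariant. Because \<open>A\<close> and \<open>B\<close>
  doubly commute, both \<open>B\<close> and \<open>B\<^sup>*\<close> are such operators, so \<open>H1\<close>, and
  with it \<open>H1\<^sup>\<bottom>\<close>, reduces \<open>B\<close>.\<close>

lemma scaleC_zero_left [simp]: "(0::complex) *\<^sub>C (x::'a::complex_vector) = 0"
  using scaleR_scaleC[of 0 x] by simp

lemma scaleC_zero_right [simp]: "c *\<^sub>C (0::'a::complex_vector) = 0"
  using scaleC_add_right[of c "0::'a" 0] by simp

lemma scaleC_minus_left: "(- c) *\<^sub>C (x::'a::complex_vector) = - (c *\<^sub>C x)"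
  using scaleC_add_left[of c "-c" x] by (simp add: minus_unique[symmetric])

lemma scaleC_minus_right: "c *\<^sub>C (- x::'a::complex_vector) = - (c *\<^sub>C x)"
  using scaleC_add_right[of c x "-x"] by (simp add: minus_unique[symmetric])

lemma scaleC_diff_right: "c *\<^sub>C (x - y::'a::complex_vector) = c *\<^sub>C x - c *\<^sub>C y"
  using scaleC_add_right[of c x "-y"] by (simp add: scaleC_minus_right)

lemma scaleR_scaleC_commute: "r *\<^sub>R (c *\<^sub>C (x::'a::complex_vector)) = c *\<^sub>C (r *\<^sub>R x)"
  by (simp add: scaleR_scaleC scaleC_scaleC mult.commute)

lemma cinner_zero_left [simp]: "cinner 0 (y::'a::complex_inner) = 0"
  using cinner_add_left[of "0::'a" 0 y] by simp

lemma cinner_zero_right [simp]: "cinner (y::'a::complex_inner) 0 = 0"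
  using cinner_commute[of y 0] by simp

lemma cinner_add_right: "cinner (x::'a::complex_inner) (y + z) = cinner x y + cinner x z"
  by (metis cinner_add_left cinner_commute complex_cnj_add)

lemma cinner_scaleC_right: "cinner (x::'a::complex_inner) (c *\<^sub>C y) = c * cinner x y"
  by (metis cinner_commute cinner_scaleC_left complex_cnj_cnj complex_cnj_mult)

lemma cinner_minus_left: "cinner (- x::'a::complex_inner) y = - cinner x y"
  using cinner_add_left[of x "-x" y] by (simp add: minus_unique[symmetric])

lemma cinner_minus_right: "cinner (x::'a::complex_inner) (- y) = - cinner x y"
  using cinner_add_right[of x y "-y"] by (simp add: minus_unique[symmetric])

lemma cinner_diff_left: "cinner (x - z::'a::complex_inner) y = cinner x y - cinner z y"
  using cinner_add_left[of x "-z" y] by (simp add: cinner_minus_left)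

lemma cinner_diff_right: "cinner (x::'a::complex_inner) (y - z) = cinner x y - cinner x z"
  using cinner_add_right[of x y "-z"] by (simp add: cinner_minus_right)

lemma cinner_scaleR_left: "cinner (r *\<^sub>R x::'a::complex_inner) y = complex_of_real r * cinner x y"
  by (simp add: scaleR_scaleC cinner_scaleC_left)

lemma cinner_scaleR_right: "cinner (x::'a::complex_inner) (r *\<^sub>R y) = complex_of_real r * cinner x y"
  by (simp add: scaleR_scaleC cinner_scaleC_right)

lemmas cinner_simps = cinner_add_left cinner_add_right cinner_diff_left cinner_diff_right
  cinner_minus_left cinner_minus_right cinner_scaleC_left cinner_scaleC_right
  cinner_scaleR_left cinner_scaleR_right

lemma cinner_self: "cinner (x::'a::complex_inner) x = complex_of_real ((norm x)\<^sup>2)"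
  using cinner_self_real[of x] cinner_self_nonneg[of x] norm_eq_sqrt_cinner[of x]
  by (simp add: complex_eq_iff)

lemma cinner_ext: "(\<And>y. cinner y (x::'a::complex_inner) = cinner y z) \<Longrightarrow> x = z"
  using cinner_self_eq_zero[of "x - z"] by (simp add: cinner_diff_right)

lemma csubspace_diff: "csubspace M \<Longrightarrow> x \<in> M \<Longrightarrow> y \<in> M \<Longrightarrow> x - y \<in> M"
  unfolding csubspace_def by (metis scaleC_minus_left scaleC_one diff_conv_add_uminus)

lemma cinner_ext_on:
  fixes u v :: "'a::complex_inner"
  assumes "csubspace M" "u \<in> M" "v \<in> M" "\<And>y. y \<in> M \<Longrightarrow> cinner y u = cinner y v"
  shows "u = v"
proof -
  have "u - v \<in> M"
    using assms(1-3) by (rule csubspace_diff)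
  then show ?thesis
    using assms(4) cinner_self_eq_zero[of "u - v"] by (simp add: cinner_diff_right)
qed

lemma norm_diff_line_projection_squared:
  fixes x y :: "'a::complex_inner"
  assumes "y \<noteq> 0"
  shows "(norm (x - (cinner y x / cinner y y) *\<^sub>C y))\<^sup>2 = (norm x)\<^sup>2 - (cmod (cinner y x))\<^sup>2 / (norm y)\<^sup>2"
proof -
  define t where "t = cinner y x / cinner y y"
  have yy: "cinner y y = complex_of_real ((norm y)\<^sup>2)" by (rule cinner_self)
  have "cinner (x - t *\<^sub>C y) (x - t *\<^sub>C y)
      = cinner x x - t * cinner x y - cnj t * cinner y x + cnj t * t * cinner y y"
    by (simp add: cinner_simps algebra_simps)
  also have "\<dots> = cinner x x - cinner y x * cnj (cinner y x) / cinner y y"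
    using assms unfolding t_def yy
    by (subst cinner_commute[of x y]) (simp add: field_simps power2_eq_square)
  finally have "complex_of_real ((norm (x - t *\<^sub>C y))\<^sup>2)
      = complex_of_real ((norm x)\<^sup>2 - (cmod (cinner y x))\<^sup>2 / (norm y)\<^sup>2)"
    by (simp add: cinner_self complex_mult_cnj cmod_power2)
  then show ?thesis
    unfolding t_def of_real_eq_iff .
qed

lemma cinner_cauchy_schwarz: "cmod (cinner (x::'a::complex_inner) y) \<le> norm x * norm y"
proof (cases "x = 0")
  case False
  have "0 \<le> (norm y)\<^sup>2 - (cmod (cinner x y))\<^sup>2 / (norm x)\<^sup>2"
    using norm_diff_line_projection_squared[OF False, of y] by (metis zero_le_power2)
  then have "(cmod (cinner x y))\<^sup>2 \<le> (norm x * norm y)\<^sup>2"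
    using False by (simp add: field_simps)
  then show ?thesis
    by (simp add: abs_le_square_iff)
qed simp

lemma bounded_linear_cinner_right: "bounded_linear (\<lambda>x. cinner (y::'a::complex_inner) x)"
proof (rule bounded_linear_intro[where K="norm y"])
  show "cinner y (r *\<^sub>R x) = r *\<^sub>R cinner y x" for r and x :: 'a
    by (simp add: cinner_scaleR_right scaleR_conv_of_real)
  show "norm (cinner y x) \<le> norm x * norm y" for x :: 'a
    using cinner_cauchy_schwarz[of y x] by (simp add: mult.commute)
qed (rule cinner_add_right)

lemma parallelogram_law:
  fixes a b :: "'a::complex_inner"
  shows "(norm (a - b))\<^sup>2 + (norm (a + b))\<^sup>2 = 2 * (norm a)\<^sup>2 + 2 * (norm b)\<^sup>2"
proof -
  have "complex_of_real ((norm (a - b))\<^sup>2 + (norm (a + b))\<^sup>2)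
      = cinner (a - b) (a - b) + cinner (a + b) (a + b)"
    by (simp add: cinner_self)
  also have "\<dots> = 2 * cinner a a + 2 * cinner b b"
    by (simp add: cinner_simps algebra_simps)
  also have "\<dots> = complex_of_real (2 * (norm a)\<^sup>2 + 2 * (norm b)\<^sup>2)"
    by (simp add: cinner_self)
  finally show ?thesis
    by (simp only: of_real_eq_iff)
qed

section \<open>Nearest points and the Riesz representation\<close>

lemma convex_csubspace: "csubspace M \<Longrightarrow> convex M"
  unfolding csubspace_def convex_def by (simp add: scaleR_scaleC)

lemma convex_minimizing_sequence_Cauchy:
  fixes s :: "nat \<Rightarrow> 'a::complex_inner"
  assumes "convex S" and s_in: "\<And>k. s k \<in> S" and d_le: "\<And>n. n \<in> S \<Longrightarrow> d \<le> norm (x - n)"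
    and lim: "(\<lambda>k. norm (x - s k)) \<longlonglongrightarrow> d"
  shows "Cauchy s"
proof (rule CauchyI)
  fix e :: real assume "0 < e"
  have "d \<ge> 0" using lim by (rule LIMSEQ_le_const) simp
  have "(\<lambda>k. (norm (x - s k))\<^sup>2) \<longlonglongrightarrow> d\<^sup>2" by (intro tendsto_intros lim)
  then have "\<forall>\<^sub>F k in sequentially. (norm (x - s k))\<^sup>2 < d\<^sup>2 + e\<^sup>2 / 4"
    by (rule order_tendstoD(2)) (use \<open>0 < e\<close> in simp)
  then obtain M where M: "\<And>k. k \<ge> M \<Longrightarrow> (norm (x - s k))\<^sup>2 < d\<^sup>2 + e\<^sup>2 / 4"
    unfolding eventually_sequentially by blast
  have "norm (s m - s n) < e" if "m \<ge> M" "n \<ge> M" for m n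
  proof -
    have "(1/2) *\<^sub>R s m + (1/2) *\<^sub>R s n \<in> S"
      using \<open>convex S\<close> s_in by (intro convexD) auto
    then have "2 * d \<le> 2 * norm (x - ((1/2) *\<^sub>R s m + (1/2) *\<^sub>R s n))"
      using d_le by simp
    also have "\<dots> = norm ((x - s m) + (x - s n))"
      using norm_scaleR[of 2 "x - ((1/2) *\<^sub>R s m + (1/2) *\<^sub>R s n)"]
      by (simp add: algebra_simps scaleR_2)
    finally have "4 * d\<^sup>2 \<le> (norm ((x - s m) + (x - s n)))\<^sup>2"
      using \<open>d \<ge> 0\<close> power_mono[of "2 * d" _ 2] by (simp add: power_mult_distrib)
    moreover have "(norm (s m - s n))\<^sup>2
        = 2 * (norm (x - s m))\<^sup>2 + 2 * (norm (x - s n))\<^sup>2 - (norm ((x - s m) + (x - s n)))\<^sup>2"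
      using parallelogram_law[of "x - s n" "x - s m"] by (simp add: add.commute)
    ultimately have "(norm (s m - s n))\<^sup>2 < e\<^sup>2"
      using M[OF \<open>m \<ge> M\<close>] M[OF \<open>n \<ge> M\<close>] by simp
    then show ?thesis
      using \<open>0 < e\<close> by (simp add: power_less_imp_less_base)
  qed
  then show "\<exists>M. \<forall>m\<ge>M. \<forall>n\<ge>M. norm (s m - s n) < e" by blast
qed

lemma nearest_point_exists:
  fixes S :: "'a::chilbert_space set"
  assumes "closed S" "convex S" "S \<noteq> {}"
  shows "\<exists>m\<in>S. \<forall>n\<in>S. norm (x - m) \<le> norm (x - n)"
proof -
  define d where "d = Inf ((\<lambda>n. norm (x - n)) ` S)"
  have d_le: "d \<le> norm (x - n)" if "n \<in> S" for n
    unfolding d_def using that by (intro cInf_lower) (auto intro: bdd_belowI[where m=0])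
  have "\<exists>n\<in>S. norm (x - n) < d + 1 / (real k + 1)" for k
    using cInf_lessD[of "(\<lambda>n. norm (x - n)) ` S" "d + 1 / (real k + 1)"] assms(3)
    unfolding d_def by (auto simp: add_pos_pos)
  then obtain s where s_in: "\<And>k. s k \<in> S" and s_close: "\<And>k. norm (x - s k) < d + 1 / (real k + 1)"
    by metis
  have lim: "(\<lambda>k. norm (x - s k)) \<longlonglongrightarrow> d"
  proof (rule tendsto_sandwich[where f="\<lambda>k. d" and h="\<lambda>k. d + 1 / (real k + 1)"])
    show "(\<lambda>k. d + 1 / (real k + 1)) \<longlonglongrightarrow> d"
      using tendsto_add[OF tendsto_const LIMSEQ_Suc[OF lim_const_over_n[of 1]], of d]
      by (simp add: add.commute)
    show "\<forall>\<^sub>F k in sequentially. d \<le> norm (x - s k)"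
      using d_le s_in by (simp add: always_eventually)
    show "\<forall>\<^sub>F k in sequentially. norm (x - s k) \<le> d + 1 / (real k + 1)"
      using s_close by (simp add: always_eventually less_imp_le)
  qed simp
  have "Cauchy s"
    by (rule convex_minimizing_sequence_Cauchy[OF assms(2) s_in d_le lim])
  then obtain m where "s \<longlonglongrightarrow> m"
    using Cauchy_convergent_iff convergent_def by blast
  then have "m \<in> S"
    using closed_sequentially[OF assms(1)] s_in by blast
  have "(\<lambda>k. norm (x - s k)) \<longlonglongrightarrow> norm (x - m)"
    using \<open>s \<longlonglongrightarrow> m\<close> by (intro tendsto_intros)
  then have "norm (x - m) = d"
    using lim LIMSEQ_unique by blast
  then show ?thesis
    using \<open>m \<in> S\<close> d_le by auto
qed

lemma nearest_point_orthogonal: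
  fixes x m :: "'a::complex_inner"
  assumes "csubspace N" "m \<in> N" "n \<in> N" and nearest: "\<forall>n\<in>N. norm (x - m) \<le> norm (x - n)"
  shows "cinner n (x - m) = 0"
proof (rule ccontr)
  assume nonzero: "cinner n (x - m) \<noteq> 0"
  then have "n \<noteq> 0" by auto
  define t where "t = cinner n (x - m) / cinner n n"
  have "m + t *\<^sub>C n \<in> N"
    using assms(1-3) unfolding csubspace_def by blast
  then have "(norm (x - m))\<^sup>2 \<le> (norm ((x - m) - t *\<^sub>C n))\<^sup>2"
    using nearest by (simp add: diff_diff_eq power_mono)
  also have "\<dots> = (norm (x - m))\<^sup>2 - (cmod (cinner n (x - m)))\<^sup>2 / (norm n)\<^sup>2"
    unfolding t_def by (rule norm_diff_line_projection_squared[OF \<open>n \<noteq> 0\<close>])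
  moreover have "0 < (cmod (cinner n (x - m)))\<^sup>2 / (norm n)\<^sup>2"
    using nonzero \<open>n \<noteq> 0\<close> by (intro divide_pos_pos) auto
  ultimately show False
    by simp
qed

lemma riesz_representation:
  fixes f :: "'a::chilbert_space \<Rightarrow> complex"
  assumes lin: "bounded_linear f" and hom: "\<And>c x. f (c *\<^sub>C x) = c * f x"
  shows "\<exists>z. \<forall>x. f x = cinner z x"
proof (cases "\<forall>x. f x = 0")
  case True
  then show ?thesis by (intro exI[of _ 0]) simp
next
  case False
  then obtain x0 where "f x0 \<noteq> 0" by blast
  define N where "N = {x. f x = 0}"
  have N: "csubspace N"
    unfolding csubspace_def N_def using lin hom by (auto simp: linear_simps)
  moreover have "closed N"
    unfolding N_def by (intro closed_Collect_eq linear_continuous_on lin continuous_on_const)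
  moreover have "N \<noteq> {}"
    using N unfolding csubspace_def by blast
  ultimately obtain m where "m \<in> N" and nearest: "\<forall>n\<in>N. norm (x0 - m) \<le> norm (x0 - n)"
    using nearest_point_exists convex_csubspace by blast
  define u where "u = x0 - m"
  have u_perp: "cinner u n = 0" if "n \<in> N" for n
    using nearest_point_orthogonal[OF N \<open>m \<in> N\<close> that nearest] cinner_commute[of u n]
    by (simp add: u_def)
  have "f u \<noteq> 0"
    using \<open>f x0 \<noteq> 0\<close> \<open>m \<in> N\<close> lin by (simp add: u_def N_def linear_simps)
  then have "cinner u u \<noteq> 0"
    using lin by (auto simp: cinner_self_eq_zero linear_simps)
  have "f x = cinner (cnj (f u / cinner u u) *\<^sub>C u) x" for x
  proof -
    have "x - (f x / f u) *\<^sub>C u \<in> N"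
      using \<open>f u \<noteq> 0\<close> lin hom by (simp add: N_def linear_simps)
    then have "cinner u (x - (f x / f u) *\<^sub>C u) = 0"
      by (rule u_perp)
    then have "cinner u x = (f x / f u) * cinner u u"
      by (simp add: cinner_diff_right cinner_scaleC_right)
    then show ?thesis
      using \<open>f u \<noteq> 0\<close> \<open>cinner u u \<noteq> 0\<close> by (simp add: cinner_scaleC_left)
  qed
  then show ?thesis by blast
qed

lemma
  assumes "bounded_clinear T"
  shows bounded_clinear_add: "T (x + y) = T x + T y"
    and bounded_clinear_diff: "T (x - y) = T x - T y"
    and bounded_clinear_scaleR: "T (r *\<^sub>R x) = r *\<^sub>R T x"
    and bounded_clinear_zero: "T 0 = 0"
    and bounded_clinear_scaleC: "T (c *\<^sub>C x) = c *\<^sub>C T x"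
  using assms unfolding bounded_clinear_def by (simp_all add: linear_simps)

lemma bounded_clinear_ident: "bounded_clinear (\<lambda>x. x)"
  unfolding bounded_clinear_def by (simp add: bounded_linear_ident)

lemma bounded_clinear_compose:
  "bounded_clinear f \<Longrightarrow> bounded_clinear g \<Longrightarrow> bounded_clinear (\<lambda>x. f (g x))"
  unfolding bounded_clinear_def using bounded_linear_compose[of f g] by auto

lemma cinner_cadjoint:
  fixes T :: "'a::chilbert_space \<Rightarrow> 'a"
  assumes "bounded_clinear T"
  shows "cinner (T x) y = cinner x (cadjoint T y)"
proof -
  have "\<exists>z. \<forall>x. cinner y (T x) = cinner z x" for y
  proof (rule riesz_representation)
    show "bounded_linear (\<lambda>x. cinner y (T x))"
      using assms bounded_linear_compose[OF bounded_linear_cinner_right]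
      unfolding bounded_clinear_def by blast
  qed (simp add: bounded_clinear_scaleC[OF assms] cinner_scaleC_right)
  then obtain S where "\<And>y x. cinner y (T x) = cinner (S y) x"
    by metis
  then have "\<exists>S. \<forall>x y. cinner (T x) y = cinner x (S y)"
    by (metis cinner_commute)
  then have "\<forall>x y. cinner (T x) y = cinner x (cadjoint T y)"
    unfolding cadjoint_def by (rule someI_ex)
  then show ?thesis by blast
qed

lemma cinner_cadjoint_left:
  fixes T :: "'a::chilbert_space \<Rightarrow> 'a"
  assumes "bounded_clinear T"
  shows "cinner (cadjoint T x) y = cinner x (T y)"
  by (metis cinner_cadjoint[OF assms] cinner_commute)

lemma bounded_clinear_cadjoint:
  fixes T :: "'a::chilbert_space \<Rightarrow> 'a"
  assumes T: "bounded_clinear T"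
  shows "bounded_clinear (cadjoint T)"
proof -
  let ?S = "cadjoint T"
  have add: "?S (x + y) = ?S x + ?S y" for x y
    by (rule cinner_ext) (simp add: cinner_cadjoint[OF T, symmetric] cinner_simps)
  have hom: "?S (c *\<^sub>C x) = c *\<^sub>C ?S x" for c x
    by (rule cinner_ext) (simp add: cinner_cadjoint[OF T, symmetric] cinner_simps)
  obtain K where "K > 0" and K: "\<And>x. norm (T x) \<le> norm x * K"
    using bounded_linear.pos_bounded T unfolding bounded_clinear_def by blast
  have "norm (?S y) \<le> norm y * K" for y
  proof -
    have "(norm (?S y))\<^sup>2 = Re (cinner (T (?S y)) y)"
      by (simp add: cinner_cadjoint[OF T] cinner_self)
    also have "\<dots> \<le> norm (T (?S y)) * norm y"
      using complex_Re_le_cmod cinner_cauchy_schwarz order_trans by blast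
    also have "\<dots> \<le> norm (?S y) * (norm y * K)"
      using mult_right_mono[OF K[of "?S y"] norm_ge_zero[of y]] by (simp add: mult_ac)
    finally show ?thesis
      by (cases "?S y = 0") (use \<open>K > 0\<close> in \<open>auto simp: power2_eq_square\<close>)
  qed
  then have "bounded_linear ?S"
    by (intro bounded_linear_intro[OF add]) (simp_all add: scaleR_scaleC hom)
  then show ?thesis
    unfolding bounded_clinear_def using hom by blast
qed

lemma cadjoint_commute:
  fixes A B :: "'a::chilbert_space \<Rightarrow> 'a"
  assumes A: "bounded_clinear A" and B: "bounded_clinear B" and AB: "\<And>x. A (B x) = B (A x)"
  shows "cadjoint A (cadjoint B x) = cadjoint B (cadjoint A x)"
proof (rule cinner_ext)
  fix y
  have "cinner y (cadjoint A (cadjoint B x)) = cinner (B (A y)) x"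
    by (simp add: cinner_cadjoint[OF A, symmetric] cinner_cadjoint[OF B, symmetric])
  also have "\<dots> = cinner y (cadjoint B (cadjoint A x))"
    by (simp add: cinner_cadjoint[OF A] cinner_cadjoint[OF B] flip: AB)
  finally show "cinner y (cadjoint A (cadjoint B x)) = cinner y (cadjoint B (cadjoint A x))" .
qed

lemma commute_cadjoint_swap:
  fixes A B :: "'a::chilbert_space \<Rightarrow> 'a"
  assumes A: "bounded_clinear A" and B: "bounded_clinear B"
    and commute: "\<And>x. A (cadjoint B x) = cadjoint B (A x)"
  shows "B (cadjoint A x) = cadjoint A (B x)"
proof (rule cinner_ext)
  fix y
  have "cinner y (B (cadjoint A x)) = cinner (A (cadjoint B y)) x"
    by (simp add: cinner_cadjoint_left[OF B, symmetric] cinner_cadjoint[OF A])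
  also have "\<dots> = cinner y (cadjoint A (B x))"
    by (simp add: commute cinner_cadjoint_left[OF B] cinner_cadjoint[OF A])
  finally show "cinner y (B (cadjoint A x)) = cinner y (cadjoint A (B x))" .
qed

lemma closed_csubspace_orthogonal_complement:
  "closed_csubspace (orthogonal_complement (M::'a::complex_inner set))"
  unfolding closed_csubspace_def csubspace_def orthogonal_complement_def
proof (intro conjI)
  have "closed {x. \<forall>y. y \<in> M \<longrightarrow> cinner y x = 0}"
    by (intro closed_Collect_all closed_Collect_imp closed_Collect_eq continuous_on_const
        linear_continuous_on bounded_linear_cinner_right) auto
  then show "closed {x. \<forall>y\<in>M. cinner y x = 0}"
    by (simp only: Ball_def)
qed (auto simp: cinner_simps)

lemma reduces_orthogonal_complement:
  fixes B :: "'a::chilbert_space \<Rightarrow> 'a"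
  assumes "bounded_clinear B" "reduces B M"
  shows "reduces B (orthogonal_complement M)"
proof -
  have "B ` M \<subseteq> M" "cadjoint B ` M \<subseteq> M"
    using assms(2) unfolding reduces_def by auto
  then have "B ` orthogonal_complement M \<subseteq> orthogonal_complement M"
    and "cadjoint B ` orthogonal_complement M \<subseteq> orthogonal_complement M"
    by (auto simp: orthogonal_complement_def
        cinner_cadjoint[OF assms(1), symmetric] cinner_cadjoint_left[OF assms(1), symmetric])
  then show ?thesis
    unfolding reduces_def using closed_csubspace_orthogonal_complement by blast
qed

section \<open>The largest reducing subspace inside a kernel\<close>

fun word_apply :: "('a \<Rightarrow> 'a) \<Rightarrow> ('a \<Rightarrow> 'a) \<Rightarrow> bool list \<Rightarrow> 'a \<Rightarrow> 'a" where
  "word_apply f g [] x = x"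
| "word_apply f g (b # w) x = word_apply f g w (if b then f x else g x)"

lemma word_apply_commute:
  assumes "\<And>x. f (h x) = h (f x)" "\<And>x. g (h x) = h (g x)"
  shows "word_apply f g w (h x) = h (word_apply f g w x)"
  using assms by (induction w arbitrary: x) auto

lemma word_apply_closed:
  assumes "f ` M \<subseteq> M" "g ` M \<subseteq> M" "x \<in> M"
  shows "word_apply f g w x \<in> M"
  using assms by (induction w arbitrary: x) auto

lemma bounded_clinear_word_apply:
  assumes "bounded_clinear f" "bounded_clinear g"
  shows "bounded_clinear (word_apply f g w)"
proof (induction w)
  case Nil
  then show ?case by (simp add: bounded_clinear_ident)
next
  case (Cons b w)
  have "word_apply f g (b # w) = (\<lambda>x. word_apply f g w ((if b then f else g) x))"
    by auto
  then show ?case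
    using bounded_clinear_compose[OF Cons assms(1)] bounded_clinear_compose[OF Cons assms(2)]
    by (cases b) auto
qed

text \<open>The largest subspace that reduces \<open>A\<close> and on which \<open>D\<close> vanishes.\<close>
definition reducing_core :: "('a::complex_inner \<Rightarrow> 'a) \<Rightarrow> ('a \<Rightarrow> 'a) \<Rightarrow> 'a set" where
  "reducing_core A D = {x. \<forall>w. D (word_apply A (cadjoint A) w x) = 0}"

lemma reducing_core_kernel: "x \<in> reducing_core A D \<Longrightarrow> D x = 0"
  unfolding reducing_core_def by (auto dest: spec[of _ "[]"])

lemma reducing_core_step:
  assumes "x \<in> reducing_core A D"
  shows "A x \<in> reducing_core A D" and "cadjoint A x \<in> reducing_core A D"
proof -
  have "D (word_apply A (cadjoint A) (b # w) x) = 0" for b w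
    using assms unfolding reducing_core_def by blast
  from this[of True] this[of False] show "A x \<in> reducing_core A D" "cadjoint A x \<in> reducing_core A D"
    unfolding reducing_core_def by auto
qed

lemma reduces_reducing_core:
  fixes A D :: "'a::chilbert_space \<Rightarrow> 'a"
  assumes A: "bounded_clinear A" and D: "bounded_clinear D"
  shows "reduces A (reducing_core A D)"
proof -
  have lin: "bounded_clinear (\<lambda>x. D (word_apply A (cadjoint A) w x))" for w
    by (intro bounded_clinear_compose[OF D] bounded_clinear_word_apply A bounded_clinear_cadjoint)
  have "closed (reducing_core A D)"
    unfolding reducing_core_def
    by (intro closed_Collect_all closed_Collect_eq continuous_on_const linear_continuous_on)
      (use lin in \<open>simp add: bounded_clinear_def\<close>)
  moreover have "csubspace (reducing_core A D)"
    unfolding csubspace_def reducing_core_def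
    by (simp add: bounded_clinear_zero[OF lin] bounded_clinear_add[OF lin] bounded_clinear_scaleC[OF lin])
  ultimately show ?thesis
    unfolding reduces_def closed_csubspace_def using reducing_core_step by blast
qed

lemma reducing_core_greatest:
  assumes "reduces A M" "\<And>x. x \<in> M \<Longrightarrow> D x = 0"
  shows "M \<subseteq> reducing_core A D"
  using assms word_apply_closed[of A M "cadjoint A"] unfolding reduces_def reducing_core_def by blast

lemma reducing_core_invariant:
  assumes "h 0 = 0" "\<And>x. h (A x) = A (h x)" "\<And>x. h (cadjoint A x) = cadjoint A (h x)"
    and "\<And>x. h (D x) = D (h x)"
  shows "h ` reducing_core A D \<subseteq> reducing_core A D"
  using assms word_apply_commute[of A h "cadjoint A"]
  unfolding reducing_core_def by (auto simp flip: assms(4))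

lemma orth_proj_on_scaleR:
  "orth_proj_on M P \<Longrightarrow> x \<in> M \<Longrightarrow> P (r *\<^sub>R x) = r *\<^sub>R P x"
  unfolding orth_proj_on_def by (simp add: scaleR_scaleC)

lemma orth_proj_on_diff:
  assumes "orth_proj_on M P" "csubspace M" "x \<in> M" "y \<in> M"
  shows "P (x - y) = P x - P y"
proof -
  have "(-1::real) *\<^sub>R y \<in> M"
    using assms(2,4) unfolding csubspace_def by (simp add: scaleR_scaleC)
  then have "P (x + (-1::real) *\<^sub>R y) = P x + (-1::real) *\<^sub>R P y"
    using assms unfolding orth_proj_on_def by (simp add: scaleR_scaleC)
  then show ?thesis by simp
qed

lemma orth_proj_on_complement:
  assumes P: "orth_proj_on M P" and M: "csubspace M"
  shows "orth_proj_on M (\<lambda>x. x - P x)"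
  unfolding orth_proj_on_def
proof (intro conjI ballI allI)
  fix x y assume x: "x \<in> M" and y: "y \<in> M"
  have Px: "P x \<in> M"
    using P x unfolding orth_proj_on_def by auto
  show "x - P x \<in> M"
    using M x Px by (rule csubspace_diff)
  show "x - P x - P (x - P x) = x - P x"
    using P x Px by (simp add: orth_proj_on_diff[OF P M] orth_proj_on_def)
  show "x + y - P (x + y) = x - P x + (y - P y)"
    using P x y unfolding orth_proj_on_def by simp
  show "c *\<^sub>C x - P (c *\<^sub>C x) = c *\<^sub>C (x - P x)" for c
    using P x unfolding orth_proj_on_def by (simp add: scaleC_diff_right)
  show "cinner (x - P x) y = cinner x (y - P y)"
    using P x y unfolding orth_proj_on_def by (simp add: cinner_diff_left cinner_diff_right)
qed

lemma complementary_orth_proj_on_zero: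
  assumes P: "orth_proj_on M P" and Q: "orth_proj_on M Q" and M: "csubspace M"
    and sum: "\<And>x. x \<in> M \<Longrightarrow> P x + Q x = x" and "x \<in> M"
  shows "P (Q x) = 0"
proof -
  have "Q x = x - P x" using sum[OF \<open>x \<in> M\<close>] by (metis add_diff_cancel_left')
  moreover have "P x \<in> M" "P (P x) = P x"
    using P \<open>x \<in> M\<close> unfolding orth_proj_on_def by auto
  ultimately show ?thesis
    using orth_proj_on_diff[OF P M \<open>x \<in> M\<close>] by simp
qed

lemma orth_proj_on_combination_quadratic:
  fixes P0 P1 :: "'a::complex_inner \<Rightarrow> 'a" and \<rho> :: real
  assumes P0: "orth_proj_on M P0" and P1: "orth_proj_on M P1" and M: "csubspace M"
    and sum: "\<And>x. x \<in> M \<Longrightarrow> P0 x + P1 x = x" and "x \<in> M"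
  defines "T \<equiv> \<lambda>y. P0 y + \<rho> *\<^sub>R P1 y"
  shows "T (T x) - (1 + \<rho>) *\<^sub>R T x + \<rho> *\<^sub>R x = 0"
proof -
  define p q where "p = P0 x" and "q = P1 x"
  have "p \<in> M" "q \<in> M" "\<rho> *\<^sub>R q \<in> M"
    using P0 P1 M \<open>x \<in> M\<close> unfolding p_def q_def orth_proj_on_def csubspace_def
    by (auto simp: scaleR_scaleC)
  have "P0 p = p" "P1 q = q"
    using P0 P1 \<open>x \<in> M\<close> unfolding p_def q_def orth_proj_on_def by auto
  moreover have "P0 q = 0" "P1 p = 0"
    unfolding p_def q_def using complementary_orth_proj_on_zero[OF P0 P1 M] sum
      complementary_orth_proj_on_zero[OF P1 P0 M] \<open>x \<in> M\<close> by (auto simp: add.commute)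
  ultimately have "T (p + \<rho> *\<^sub>R q) = p + (\<rho> * \<rho>) *\<^sub>R q"
    using \<open>p \<in> M\<close> \<open>q \<in> M\<close> \<open>\<rho> *\<^sub>R q \<in> M\<close>
    by (simp add: T_def P0[unfolded orth_proj_on_def] P1[unfolded orth_proj_on_def]
        orth_proj_on_scaleR[OF P0] orth_proj_on_scaleR[OF P1])
  moreover have "T x = p + \<rho> *\<^sub>R q" "x = p + q"
    using sum[OF \<open>x \<in> M\<close>] unfolding T_def p_def q_def by auto
  ultimately show ?thesis
    by (simp add: algebra_simps)
qed

text \<open>The orthogonal projection onto the eigenspace of \<open>T\<close> for the eigenvalue \<open>1\<close>.\<close>
lemma orth_proj_on_quadratic_relation:
  fixes T :: "'a::complex_inner \<Rightarrow> 'a"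
  assumes T: "bounded_clinear T" and self_adjoint: "\<And>x y. cinner (T x) y = cinner x (T y)"
    and M: "csubspace M" and T_in: "\<And>x. x \<in> M \<Longrightarrow> T x \<in> M" and "\<rho> \<noteq> 1"
    and quadratic: "\<And>x. x \<in> M \<Longrightarrow> T (T x) - (1 + \<rho>) *\<^sub>R T x + \<rho> *\<^sub>R x = 0"
  shows "orth_proj_on M (\<lambda>x. (1 / (1 - \<rho>)) *\<^sub>R (T x - \<rho> *\<^sub>R x))"
proof -
  define P where "P x = (1 / (1 - \<rho>)) *\<^sub>R (T x - \<rho> *\<^sub>R x)" for x
  have P_scaled: "(1 - \<rho>) *\<^sub>R P x = T x - \<rho> *\<^sub>R x" for x
    using \<open>\<rho> \<noteq> 1\<close> by (simp add: P_def)
  have T_P: "T (P x) = P x" if "x \<in> M" for x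
  proof -
    have "(1 - \<rho>) *\<^sub>R T (P x) = T (T x) - \<rho> *\<^sub>R T x"
      by (simp add: bounded_clinear_scaleR[OF T, symmetric] P_scaled bounded_clinear_diff[OF T])
    also have "\<dots> = T x - \<rho> *\<^sub>R x"
      using quadratic[OF that] by (simp add: algebra_simps eq_neg_iff_add_eq_0)
    finally show ?thesis
      using \<open>\<rho> \<noteq> 1\<close> by (simp flip: P_scaled)
  qed
  have "orth_proj_on M P"
    unfolding orth_proj_on_def
  proof (intro conjI ballI allI)
    fix x y assume "x \<in> M" "y \<in> M"
    show "P x \<in> M"
      unfolding P_def using M \<open>x \<in> M\<close> T_in[OF \<open>x \<in> M\<close>]
      by (simp add: csubspace_diff csubspace_def scaleR_scaleC)
    have "(1 - \<rho>) *\<^sub>R P (P x) = (1 - \<rho>) *\<^sub>R P x"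
      using P_scaled[of "P x"] by (simp add: T_P[OF \<open>x \<in> M\<close>] scaleR_diff_left)
    then show "P (P x) = P x"
      using \<open>\<rho> \<noteq> 1\<close> by simp
    show "P (x + y) = P x + P y"
      by (simp add: P_def bounded_clinear_add[OF T] algebra_simps)
    show "P (c *\<^sub>C x) = c *\<^sub>C P x" for c
    proof -
      have "T (c *\<^sub>C x) - \<rho> *\<^sub>R (c *\<^sub>C x) = c *\<^sub>C (T x - \<rho> *\<^sub>R x)"
        by (simp add: bounded_clinear_scaleC[OF T] scaleC_diff_right scaleR_scaleC_commute)
      then show ?thesis
        unfolding P_def by (simp only: scaleR_scaleC_commute)
    qed
    show "cinner (P x) y = cinner x (P y)"
      by (simp add: P_def cinner_simps self_adjoint)
  qed
  then show ?thesis
    unfolding P_def .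
qed

section \<open>The Gram operator\<close>

definition gram :: "('a::complex_inner \<Rightarrow> 'a) \<Rightarrow> 'a \<Rightarrow> 'a" where
  "gram A x = cadjoint A (A x)"

definition gram_quadratic :: "real \<Rightarrow> ('a::complex_inner \<Rightarrow> 'a) \<Rightarrow> 'a \<Rightarrow> 'a" where
  "gram_quadratic \<rho> A x = gram A (gram A x) - (1 + \<rho>) *\<^sub>R gram A x + \<rho> *\<^sub>R x"

lemma cinner_gram:
  fixes A :: "'a::chilbert_space \<Rightarrow> 'a"
  shows "bounded_clinear A \<Longrightarrow> cinner x (gram A y) = cinner (A x) (A y)"
  using cinner_cadjoint[of A x "A y"] by (simp add: gram_def)

lemma gram_self_adjoint:
  fixes A :: "'a::chilbert_space \<Rightarrow> 'a"
  shows "bounded_clinear A \<Longrightarrow> cinner (gram A x) y = cinner x (gram A y)"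
  by (simp add: gram_def cinner_cadjoint[of A] cinner_cadjoint_left[of A])

lemma bounded_clinear_gram:
  fixes A :: "'a::chilbert_space \<Rightarrow> 'a"
  shows "bounded_clinear A \<Longrightarrow> bounded_clinear (gram A)"
  unfolding gram_def[abs_def] by (rule bounded_clinear_compose[OF bounded_clinear_cadjoint])

lemma gram_closed: "reduces A M \<Longrightarrow> x \<in> M \<Longrightarrow> gram A x \<in> M"
  unfolding reduces_def gram_def by blast

lemma bounded_clinear_gram_quadratic:
  fixes A :: "'a::chilbert_space \<Rightarrow> 'a"
  assumes "bounded_clinear A"
  shows "bounded_clinear (gram_quadratic \<rho> A)"
proof -
  have T: "bounded_clinear (gram A)"
    by (rule bounded_clinear_gram[OF assms])
  then have T_lin: "bounded_linear (gram A)"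
    unfolding bounded_clinear_def by blast
  then have "bounded_linear (\<lambda>x. gram A (gram A x))"
    using bounded_linear_compose by blast
  then have "bounded_linear (gram_quadratic \<rho> A)"
    unfolding gram_quadratic_def[abs_def]
    by (intro bounded_linear_add bounded_linear_sub bounded_linear_const_scaleR T_lin bounded_linear_ident)
  moreover have "gram_quadratic \<rho> A (c *\<^sub>C x) = c *\<^sub>C gram_quadratic \<rho> A x" for c x
    by (simp add: gram_quadratic_def bounded_clinear_scaleC[OF T] scaleC_add_right scaleC_diff_right
        scaleR_scaleC_commute)
  ultimately show ?thesis
    unfolding bounded_clinear_def by blast
qed

lemma gram_quadratic_commute:
  assumes "bounded_clinear h" "\<And>x. h (A x) = A (h x)" "\<And>x. h (cadjoint A x) = cadjoint A (h x)"
  shows "h (gram_quadratic \<rho> A x) = gram_quadratic \<rho> A (h x)"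
  using assms(2,3) by (simp add: gram_quadratic_def gram_def bounded_clinear_add[OF assms(1)]
      bounded_clinear_diff[OF assms(1)] bounded_clinear_scaleR[OF assms(1)])

lemma gram_eq_on_reducing:
  fixes A :: "'a::chilbert_space \<Rightarrow> 'a"
  assumes A: "bounded_clinear A" and red: "reduces A M" and S_in: "\<And>y. y \<in> M \<Longrightarrow> S y \<in> M"
    and form: "\<And>x y. x \<in> M \<Longrightarrow> y \<in> M \<Longrightarrow> cinner (A x) (A y) = cinner x (S y)"
    and "y \<in> M"
  shows "gram A y = S y"
proof (rule cinner_ext_on)
  show "csubspace M"
    using red unfolding reduces_def closed_csubspace_def by blast
  show "gram A y \<in> M" "S y \<in> M"
    using gram_closed[OF red] S_in \<open>y \<in> M\<close> by auto
  show "cinner z (gram A y) = cinner z (S y)" if "z \<in> M" for z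
    using form[OF that \<open>y \<in> M\<close>] by (simp add: cinner_gram[OF A])
qed

lemma gram_quadratic_vanishes_if_classC1r_on:
  fixes A :: "'a::chilbert_space \<Rightarrow> 'a"
  assumes A: "bounded_clinear A" and red: "reduces A M" and "classC1r_on r M A" and "x \<in> M"
  shows "gram_quadratic (r\<^sup>2) A x = 0"
proof -
  obtain P0 P1 where P0: "orth_proj_on M P0" and P1: "orth_proj_on M P1"
    and sum: "\<And>x. x \<in> M \<Longrightarrow> P0 x + P1 x = x"
    and form: "\<And>x y. x \<in> M \<Longrightarrow> y \<in> M \<Longrightarrow>
      cinner (A x) (A y) = cinner x (P0 y + complex_of_real (r\<^sup>2) *\<^sub>C P1 y)"
    using \<open>classC1r_on r M A\<close> unfolding classC1r_on_def by blast
  have M: "csubspace M"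
    using red unfolding reduces_def closed_csubspace_def by blast
  have in_M: "P0 y + r\<^sup>2 *\<^sub>R P1 y \<in> M" if "y \<in> M" for y
    using M P0 P1 that unfolding csubspace_def orth_proj_on_def by (simp add: scaleR_scaleC)
  have "gram A y = P0 y + r\<^sup>2 *\<^sub>R P1 y" if "y \<in> M" for y
    using gram_eq_on_reducing[OF A red in_M _ that] form by (simp add: scaleR_scaleC)
  then show ?thesis
    using orth_proj_on_combination_quadratic[OF P0 P1 M sum \<open>x \<in> M\<close>] in_M[OF \<open>x \<in> M\<close>] \<open>x \<in> M\<close>
    by (simp add: gram_quadratic_def)
qed

lemma classC1r_on_if_gram_quadratic_vanishes:
  fixes A :: "'a::chilbert_space \<Rightarrow> 'a"
  assumes A: "bounded_clinear A" and red: "reduces A M" and "r\<^sup>2 \<noteq> 1"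
    and vanish: "\<And>x. x \<in> M \<Longrightarrow> gram_quadratic (r\<^sup>2) A x = 0"
  shows "classC1r_on r M A"
proof -
  define P where "P x = (1 / (1 - r\<^sup>2)) *\<^sub>R (gram A x - r\<^sup>2 *\<^sub>R x)" for x
  have M: "csubspace M"
    using red unfolding reduces_def closed_csubspace_def by blast
  have "orth_proj_on M P"
    unfolding P_def
  proof (rule orth_proj_on_quadratic_relation[OF bounded_clinear_gram[OF A] _ M _ \<open>r\<^sup>2 \<noteq> 1\<close>])
    show "cinner (gram A x) y = cinner x (gram A y)" for x y
      by (rule gram_self_adjoint[OF A])
    show "gram A x \<in> M" if "x \<in> M" for x
      by (rule gram_closed[OF red that])
  qed (use vanish in \<open>simp add: gram_quadratic_def\<close>)
  moreover have "gram A y = P y + r\<^sup>2 *\<^sub>R (y - P y)" for y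
  proof -
    have "gram A y = (1 - r\<^sup>2) *\<^sub>R P y + r\<^sup>2 *\<^sub>R y"
      using \<open>r\<^sup>2 \<noteq> 1\<close> by (simp add: P_def)
    then show ?thesis
      by (simp add: algebra_simps)
  qed
  then have "cinner (A x) (A y) = cinner x (P y + complex_of_real (r\<^sup>2) *\<^sub>C (y - P y))" for x y
    by (simp add: cinner_gram[OF A, symmetric] scaleR_scaleC)
  ultimately show ?thesis
    unfolding classC1r_on_def
    by (intro exI[of _ P] exI[of _ "\<lambda>x. x - P x"] conjI orth_proj_on_complement[OF _ M]) auto
qed

lemma classC1r_on_iff_gram_quadratic:
  fixes A :: "'a::chilbert_space \<Rightarrow> 'a"
  assumes "bounded_clinear A" "reduces A M" "r\<^sup>2 \<noteq> 1"
  shows "classC1r_on r M A \<longleftrightarrow> (\<forall>x\<in>M. gram_quadratic (r\<^sup>2) A x = 0)"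
  using gram_quadratic_vanishes_if_classC1r_on[OF assms(1,2)]
    classC1r_on_if_gram_quadratic_vanishes[OF assms] by blast

lemma maximal_classC1r_on_eq_reducing_core:
  fixes A :: "'a::chilbert_space \<Rightarrow> 'a"
  assumes A: "bounded_clinear A" and "r\<^sup>2 \<noteq> 1" and "reduces A H" "classC1r_on r H A"
    and maximal: "\<And>M. reduces A M \<Longrightarrow> classC1r_on r M A \<Longrightarrow> M \<subseteq> H"
  shows "H = reducing_core A (gram_quadratic (r\<^sup>2) A)"
proof
  let ?D = "gram_quadratic (r\<^sup>2) A"
  show "H \<subseteq> reducing_core A ?D"
    using reducing_core_greatest assms(3,4) classC1r_on_iff_gram_quadratic[OF A assms(3,2)] by blast
  have red: "reduces A (reducing_core A ?D)"
    by (rule reduces_reducing_core[OF A bounded_clinear_gram_quadratic[OF A]])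
  then have "classC1r_on r (reducing_core A ?D) A"
    using classC1r_on_iff_gram_quadratic[OF A red \<open>r\<^sup>2 \<noteq> 1\<close>] reducing_core_kernel by blast
  then show "reducing_core A ?D \<subseteq> H"
    using maximal red by blast
qed

lemma reducing_core_gram_quadratic_invariant:
  fixes A h :: "'a::chilbert_space \<Rightarrow> 'a"
  assumes "bounded_clinear h" "\<And>x. h (A x) = A (h x)" "\<And>x. h (cadjoint A x) = cadjoint A (h x)"
  shows "h ` reducing_core A (gram_quadratic \<rho> A) \<subseteq> reducing_core A (gram_quadratic \<rho> A)"
  using reducing_core_invariant[OF bounded_clinear_zero[OF assms(1)] assms(2,3)]
    gram_quadratic_commute[OF assms] by blast

theorem lemma3p5:
  fixes A B :: "'a::chilbert_space \<Rightarrow> 'a" and r :: real and H1 H2 :: "'a set"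
  assumes "0 < r" and "r < 1"
    and "C1r r A" and "C1r r B"
    and "\<forall>x. A (B x) = B (A x)"
    and "\<forall>x. A (cadjoint B x) = cadjoint B (A x)"
    and "reduces A H1" and "classC1r_on r H1 A"
    and "\<forall>M. reduces A M \<and> classC1r_on r M A \<longrightarrow> M \<subseteq> H1"
    and "H2 = orthogonal_complement H1"
  shows "reduces B H1 \<and> reduces B H2"
proof -
  have A: "bounded_clinear A" and B: "bounded_clinear B"
    using assms(3,4) unfolding C1r_def invertible_op_def by blast+
  have "r\<^sup>2 \<noteq> 1"
    using assms(1,2) by (simp add: power2_eq_1_iff)
  then have H1: "H1 = reducing_core A (gram_quadratic (r\<^sup>2) A)"
    using maximal_classC1r_on_eq_reducing_core[OF A _ assms(7,8)] assms(9) by blast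
  have "B ` H1 \<subseteq> H1"
    unfolding H1 using assms(5) commute_cadjoint_swap[OF A B] assms(6)
    by (intro reducing_core_gram_quadratic_invariant[OF B]) auto
  moreover have "cadjoint B ` H1 \<subseteq> H1"
    unfolding H1 using assms(6) cadjoint_commute[OF A B] assms(5)
    by (intro reducing_core_gram_quadratic_invariant[OF bounded_clinear_cadjoint[OF B]]) auto
  ultimately have "reduces B H1"
    using assms(7) unfolding reduces_def by blast
  then show ?thesis
    using reduces_orthogonal_complement[OF B] assms(10) by blast
qed

end
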